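(* Let $n\in\mathbb{N}$, $\sigma\in[1/n,1]$, $\varepsilon\in(0,1)$, and let $q$ be an $n$-arm bandit with expected utilities vector $u$. If the honest prover and the verifier of Protocol 1 interact, each with oracle access to $\mathcal{O}_q$, then with probability at least $2/3$ the verifier does not reject and outputs a strategy $\pi_V$ that is an $\varepsilon$-optimal $\sigma$-smooth strategy for $u$.
   Context: An $n$-arm bandit is a vector $q=(q_1,\dots,q_n)$ of distributions on $[0,1]$; its oracle $\mathcal{O}_q$ returns, on query ("pull") $i$, an independent sample from $q_i$; $u_i=\mathbb{E}_{x\sim q_i}[x]$. A strategy $\pi$ is a distribution on $[n]$ with $\pi\cdot u=\sum_i\pi_iu_i$; it is $\sigma$-smooth if $\pi_i\le\sigma$ for all $i$; it is an $\varepsilon$-optimal $\sigma$-smooth strategy for $u$ if it is $\sigma$-smooth and $\pi'\cdot u-\pi\cdot u\le\varepsilon$ for all $\sigma$-smooth $\pi'$. Protocol 1 (parameters $n,\sigma,\varepsilon$): Let $L=\log_4(1/\varepsilon)+2$ and $B=\{0,1,\dots,\lceil\log_4(1/\varepsilon)\rceil\}$. For $b\in B$ let $\varepsilon_b=\varepsilon\cdot4^b$, $a_b=\lceil 4^b\cdot 4n\sigma\cdot L\cdot\ln 6\rceil$ and $m_b=\lceil 128\ln(12\,L\,a_b)/\varepsilon_b^2\rceil$. The honest prover pulls each arm $i\in[n]$ exactly $k_P=\lceil128\ln(12n/\varepsilon)/\varepsilon^2\rceil$ times and sends the vector $\tilde u$ of empirical averages. The verifier receives $\tilde u\in[0,1]^n$;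 for each $b\in B$ and each $t\in[a_b]$, it samples $i_{b,t}$ uniformly from $[n]$ (independently), pulls arm $i_{b,t}$ exactly $m_b$ times, lets $\hat u_{i_{b,t}}$ be the empirical average, and rejects (terminating) if $|\tilde u_{i_{b,t}}-\hat u_{i_{b,t}}|>\varepsilon_b/8$. If it never rejects, it outputs the strategy $\pi_V$ computed from $\tilde u$ as follows: sort indices $i_1,\dots,i_n$ so that $\tilde u_{i_1}\ge\dots\ge\tilde u_{i_n}$, set $\pi_{i_j}=\sigma$ for $j\le\lfloor1/\sigma\rfloor$, $\pi_{i_j}=1-\sigma\lfloor1/\sigma\rfloor$ for $j=\lfloor1/\sigma\rfloor+1$, and $\pi_{i_j}=0$ otherwise. *)

theory Defs
  imports "HOL-Probability.Probability"
begin

definition bandit :: "nat \<Rightarrow> (nat \<Rightarrow> real measure) \<Rightarrow> bool" where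
  "bandit n q \<longleftrightarrow> (\<forall>i<n. prob_space (q i) \<and> sets (q i) = sets borel \<and> measure (q i) {0..1} = 1)"

definition arm_mean :: "(nat \<Rightarrow> real measure) \<Rightarrow> nat \<Rightarrow> real" where
  "arm_mean q i = integral\<^sup>L (q i) (\<lambda>x. x)"

definition strategy :: "nat \<Rightarrow> (nat \<Rightarrow> real) \<Rightarrow> bool" where
  "strategy n \<pi> \<longleftrightarrow> (\<forall>i<n. 0 \<le> \<pi> i) \<and> (\<Sum>i<n. \<pi> i) = 1"

definition smooth_strategy :: "nat \<Rightarrow> real \<Rightarrow> (nat \<Rightarrow> real) \<Rightarrow> bool" where
  "smooth_strategy n \<sigma> \<pi> \<longleftrightarrow> strategy n \<pi> \<and> (\<forall>i<n. \<pi> i \<le> \<sigma>)"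

definition payoff :: "nat \<Rightarrow> (nat \<Rightarrow> real) \<Rightarrow> (nat \<Rightarrow> real) \<Rightarrow> real" where
  "payoff n \<pi> u = (\<Sum>i<n. \<pi> i * u i)"

definition eps_opt_smooth :: "nat \<Rightarrow> real \<Rightarrow> real \<Rightarrow> (nat \<Rightarrow> real) \<Rightarrow> (nat \<Rightarrow> real) \<Rightarrow> bool" where
  "eps_opt_smooth n \<sigma> \<epsilon> u \<pi> \<longleftrightarrow> smooth_strategy n \<sigma> \<pi> \<and>
     (\<forall>\<pi>'. smooth_strategy n \<sigma> \<pi>' \<longrightarrow> payoff n \<pi>' u - payoff n \<pi> u \<le> \<epsilon>)"

definition protoL :: "real \<Rightarrow> real" where
  "protoL \<epsilon> = log 4 (1/\<epsilon>) + 2"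

text \<open>B = {0..protoBmax \<epsilon>}\<close>
definition protoBmax :: "real \<Rightarrow> nat" where
  "protoBmax \<epsilon> = nat \<lceil>log 4 (1/\<epsilon>)\<rceil>"

definition proto_eps :: "real \<Rightarrow> nat \<Rightarrow> real" where
  "proto_eps \<epsilon> b = \<epsilon> * 4 ^ b"

definition proto_a :: "nat \<Rightarrow> real \<Rightarrow> real \<Rightarrow> nat \<Rightarrow> nat" where
  "proto_a n \<sigma> \<epsilon> b = nat \<lceil>4 ^ b * 4 * real n * \<sigma> * protoL \<epsilon> * ln 6\<rceil>"

definition proto_m :: "nat \<Rightarrow> real \<Rightarrow> real \<Rightarrow> nat \<Rightarrow> nat" where
  "proto_m n \<sigma> \<epsilon> b =
     nat \<lceil>128 * ln (12 * protoL \<epsilon> * real (proto_a n \<sigma> \<epsilon> b)) / (proto_eps \<epsilon> b)\<^sup>2\<rceil>"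

definition proto_kP :: "nat \<Rightarrow> real \<Rightarrow> nat" where
  "proto_kP n \<epsilon> = nat \<lceil>128 * ln (12 * real n / \<epsilon>) / \<epsilon>\<^sup>2\<rceil>"

text \<open>Honest prover's randomness: sample (i,k) is the k-th pull of arm i,
  for i < n and k < kP; all pulls independent.\<close>
definition prover_space :: "nat \<Rightarrow> real \<Rightarrow> (nat \<Rightarrow> real measure) \<Rightarrow> (nat \<times> nat \<Rightarrow> real) measure" where
  "prover_space n \<epsilon> q = (\<Pi>\<^sub>M p \<in> {..<n} \<times> {..<proto_kP n \<epsilon>}. q (fst p))"

definition prover_msg :: "nat \<Rightarrow> real \<Rightarrow> (nat \<times> nat \<Rightarrow> real) \<Rightarrow> nat \<Rightarrow> real" where
  "prover_msg n \<epsilon> x i = (\<Sum>k<proto_kP n \<epsilon>. x (i, k)) / real (proto_kP n \<epsilon>)"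

definition verifier_step :: "nat \<Rightarrow> (nat \<Rightarrow> real measure) \<Rightarrow> nat \<Rightarrow> (nat \<times> (nat \<Rightarrow> real)) measure" where
  "verifier_step n q m =
     uniform_count_measure {..<n} \<bind>
       (\<lambda>i. distr (\<Pi>\<^sub>M j \<in> {..<m}. q i)
                   (count_space UNIV \<Otimes>\<^sub>M (\<Pi>\<^sub>M j \<in> {..<m}. (borel :: real measure)))
                   (\<lambda>ys. (i, ys)))"

definition verifier_space :: "nat \<Rightarrow> real \<Rightarrow> real \<Rightarrow> (nat \<Rightarrow> real measure)
    \<Rightarrow> (nat \<times> nat \<Rightarrow> nat \<times> (nat \<Rightarrow> real)) measure" where
  "verifier_space n \<sigma> \<epsilon> q =
     (\<Pi>\<^sub>M p \<in> (SIGMA b:{..protoBmax \<epsilon>}. {..<proto_a n \<sigma> \<epsilon> b}).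
         verifier_step n q (proto_m n \<sigma> \<epsilon> (fst p)))"

definition protocol_space :: "nat \<Rightarrow> real \<Rightarrow> real \<Rightarrow> (nat \<Rightarrow> real measure)
    \<Rightarrow> ((nat \<times> nat \<Rightarrow> real) \<times> (nat \<times> nat \<Rightarrow> nat \<times> (nat \<Rightarrow> real))) measure" where
  "protocol_space n \<sigma> \<epsilon> q = prover_space n \<epsilon> q \<Otimes>\<^sub>M verifier_space n \<sigma> \<epsilon> q"

definition verifier_accepts :: "nat \<Rightarrow> real \<Rightarrow> real \<Rightarrow> (nat \<Rightarrow> real)
    \<Rightarrow> (nat \<times> nat \<Rightarrow> nat \<times> (nat \<Rightarrow> real)) \<Rightarrow> bool" where
  "verifier_accepts n \<sigma> \<epsilon> ut v \<longleftrightarrow>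
     (\<forall>b \<le> protoBmax \<epsilon>. \<forall>t < proto_a n \<sigma> \<epsilon> b.
        \<bar>ut (fst (v (b, t))) -
          (\<Sum>j<proto_m n \<sigma> \<epsilon> b. snd (v (b, t)) j) / real (proto_m n \<sigma> \<epsilon> b)\<bar>
        \<le> proto_eps \<epsilon> b / 8)"

text \<open>Output strategy: sort [n] by decreasing ut (stable sort, ties broken by
  smaller index), give weight sigma to the first floor(1/sigma) indices, the
  remainder 1 - sigma*floor(1/sigma) to the next one, 0 to the rest.\<close>
definition greedy_weight :: "real \<Rightarrow> nat \<Rightarrow> real" where
  "greedy_weight \<sigma> j =
     (if j < nat \<lfloor>1/\<sigma>\<rfloor> then \<sigma>
      else if j = nat \<lfloor>1/\<sigma>\<rfloor> then 1 - \<sigma> * of_int \<lfloor>1/\<sigma>\<rfloor> else 0)"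

definition verifier_output :: "nat \<Rightarrow> real \<Rightarrow> (nat \<Rightarrow> real) \<Rightarrow> nat \<Rightarrow> real" where
  "verifier_output n \<sigma> ut i =
     (let ord = sort_key (\<lambda>k. - ut k) [0..<n]
      in (\<Sum>j<n. if ord ! j = i then greedy_weight \<sigma> j else 0))"

end

(*
  If every estimate of the prover is within \<epsilon>/16 of the true mean and every sample mean of the
  verifier's test (b, t) is within \<epsilon>\<^sub>b/16 of the mean of the tested arm, then every check
  passes (the two estimates differ by less than \<epsilon>\<^sub>b/8, as \<epsilon> \<le> \<epsilon>\<^sub>b), and the greedy
  strategy, being exactly optimal for the prover's vector, is \<epsilon>-optimal for the true means, since
  perturbing the utilities by \<epsilon>/16 changes every payoff by at most \<epsilon>/16.

  By Hoeffding's inequality and a union bound, the prover is accurate with probability at least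
  1 - \<epsilon>/6 (k\<^sub>P makes each arm fail with probability at most \<epsilon>/(6n)), and the verifier is accurate
  with probability at least 5/6 (m\<^sub>b makes each of the a\<^sub>b tests of level b fail with probability
  at most 1/(6 L a\<^sub>b), and there are at most L levels). Both runs are independent, so the
  protocol succeeds with probability at least (5/6)\<^sup>2 \<ge> 2/3.
*)

theory Submission
  imports Defs
begin

section \<open>Greedy smooth strategies\<close>

locale smooth_setting =
  fixes n :: nat and \<sigma> :: real
  assumes n_pos: "n > 0" and inverse_n_le_sigma: "1 / real n \<le> \<sigma>" and sigma_le_1: "\<sigma> \<le> 1"
begin

definition cap :: nat where "cap = nat \<lfloor>1/\<sigma>\<rfloor>"

lemma sigma_pos: "\<sigma> > 0"
proof -
  have "0 < 1 / real n" using n_pos by simp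
  then show ?thesis using inverse_n_le_sigma by linarith
qed

lemma real_cap: "real cap = of_int \<lfloor>1/\<sigma>\<rfloor>"
  using sigma_pos unfolding cap_def by simp

lemma sigma_cap_le_1: "\<sigma> * real cap \<le> 1"
proof -
  have "real cap \<le> 1/\<sigma>" using real_cap by simp
  then show ?thesis using sigma_pos by (simp add: field_simps)
qed

lemma one_less_sigma_Suc_cap: "1 < \<sigma> * (real cap + 1)"
proof -
  have "1/\<sigma> < real cap + 1" using real_cap by linarith
  then show ?thesis using sigma_pos by (simp add: field_simps)
qed

lemma cap_le_n: "cap \<le> n"
proof -
  have "1/\<sigma> \<le> real n" using inverse_n_le_sigma sigma_pos n_pos by (simp add: field_simps)
  then show ?thesis using real_cap by linarith
qed

lemma greedy_weight_eq:
  "greedy_weight \<sigma> j = (if j < cap then \<sigma> else if j = cap then 1 - \<sigma> * real cap else 0)"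
  unfolding greedy_weight_def cap_def[symmetric] real_cap[symmetric] by simp

lemma greedy_weight_bounds: "0 \<le> greedy_weight \<sigma> j" "greedy_weight \<sigma> j \<le> \<sigma>"
  using sigma_cap_le_1 one_less_sigma_Suc_cap sigma_pos
  unfolding greedy_weight_eq by (auto simp: algebra_simps)

lemma sum_greedy_weight: "(\<Sum>j<N. greedy_weight \<sigma> j) = (if N \<le> cap then real N * \<sigma> else 1)"
  by (induction N) (auto simp: greedy_weight_eq algebra_simps)

lemma sum_greedy_weight_n: "(\<Sum>j<n. greedy_weight \<sigma> j) = 1"
proof (cases "n \<le> cap")
  case True
  then have "cap = n" using cap_le_n by simp
  moreover have "1 \<le> real n * \<sigma>"
    using inverse_n_le_sigma n_pos by (simp add: field_simps)
  ultimately show ?thesis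
    using sum_greedy_weight[of n] sigma_cap_le_1 by (simp add: mult.commute)
qed (simp add: sum_greedy_weight)

definition rank :: "(nat \<Rightarrow> real) \<Rightarrow> nat list" where
  "rank u = sort_key (\<lambda>k. - u k) [0..<n]"

lemma length_rank: "length (rank u) = n"
  unfolding rank_def by (simp add: length_sort)

lemma distinct_rank: "distinct (rank u)"
  unfolding rank_def by (simp add: distinct_sort)

lemma set_rank: "set (rank u) = {..<n}"
  unfolding rank_def by (auto simp: set_sort)

lemma rank_nth_less: "j < n \<Longrightarrow> rank u ! j < n"
  using nth_mem[of j "rank u"] length_rank set_rank by simp

lemma rank_decreasing: "i \<le> j \<Longrightarrow> j < n \<Longrightarrow> u (rank u ! j) \<le> u (rank u ! i)"
  using sorted_nth_mono[of "map (\<lambda>k. - u k) (rank u)" i j] length_rank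
  unfolding rank_def by (simp add: sorted_sort_key)

lemma obtain_rank_index:
  assumes "i < n"
  obtains j where "j < n" "rank u ! j = i"
  using assms length_rank set_rank by (metis in_set_conv_nth lessThan_iff)

lemma verifier_output_rank:
  assumes "j < n"
  shows "verifier_output n \<sigma> u (rank u ! j) = greedy_weight \<sigma> j"
proof -
  have "verifier_output n \<sigma> u (rank u ! j) =
      (\<Sum>j'<n. if rank u ! j' = rank u ! j then greedy_weight \<sigma> j' else 0)"
    unfolding verifier_output_def rank_def by simp
  also have "\<dots> = (\<Sum>j'<n. if j' = j then greedy_weight \<sigma> j' else 0)"
    using distinct_rank length_rank assms by (intro sum.cong refl) (simp add: nth_eq_iff_index_eq)
  finally show ?thesis using assms by simp
qed

lemma smooth_verifier_output: "smooth_strategy n \<sigma> (verifier_output n \<sigma> u)"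
proof -
  have "(\<Sum>i<n. verifier_output n \<sigma> u i) =
      (\<Sum>j<n. \<Sum>i<n. if rank u ! j = i then greedy_weight \<sigma> j else 0)"
    unfolding verifier_output_def rank_def[symmetric] by (simp add: sum.swap[of _ "{..<n}"])
  also have "\<dots> = (\<Sum>j<n. greedy_weight \<sigma> j)"
  proof (intro sum.cong refl)
    fix j assume "j \<in> {..<n}"
    then have "rank u ! j \<in> {..<n}" using rank_nth_less by simp
    then show "(\<Sum>i<n. if rank u ! j = i then greedy_weight \<sigma> j else 0) = greedy_weight \<sigma> j"
      by (simp add: sum.delta)
  qed
  finally have "(\<Sum>i<n. verifier_output n \<sigma> u i) = 1"
    using sum_greedy_weight_n by simp
  moreover have "0 \<le> verifier_output n \<sigma> u i \<and> verifier_output n \<sigma> u i \<le> \<sigma>" if "i < n" for i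
    using obtain_rank_index[OF that] verifier_output_rank greedy_weight_bounds by metis
  ultimately show ?thesis unfolding smooth_strategy_def strategy_def by auto
qed

text \<open>Exchange argument: with \<open>c\<close> the value at the last position carrying weight, every
  arm above the threshold gets the maximal weight \<open>\<sigma>\<close> and every arm below it gets none,
  so each term of \<open>\<Sum>i. (\<pi> i - \<pi>' i) * (u i - c)\<close> is nonnegative.\<close>
lemma verifier_output_optimal:
  assumes "smooth_strategy n \<sigma> \<pi>'"
  shows "payoff n \<pi>' u \<le> payoff n (verifier_output n \<sigma> u) u"
proof -
  define \<pi> where "\<pi> = verifier_output n \<sigma> u"
  define k where "k = min cap (n - 1)"
  define c where "c = u (rank u ! k)"
  have "k < n" using n_pos unfolding k_def by simp
  have term_nonneg: "0 \<le> (\<pi> i - \<pi>' i) * (u i - c)" if "i < n" for i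
  proof -
    obtain j where j: "j < n" "rank u ! j = i" using obtain_rank_index[OF \<open>i < n\<close>] .
    have \<pi>_i: "\<pi> i = greedy_weight \<sigma> j" using verifier_output_rank[OF j(1), of u] unfolding \<pi>_def j(2) .
    have "0 \<le> \<pi>' i" "\<pi>' i \<le> \<sigma>"
      using assms \<open>i < n\<close> unfolding smooth_strategy_def strategy_def by auto
    consider "j < k" | "j = k" | "k < j" by linarith
    then show ?thesis
    proof cases
      case 1
      then have "\<pi> i = \<sigma>" using \<pi>_i unfolding greedy_weight_eq k_def by simp
      moreover have "c \<le> u i"
        using rank_decreasing[of j k u] 1 \<open>k < n\<close> j(2) unfolding c_def by simp
      ultimately show ?thesis using \<open>\<pi>' i \<le> \<sigma>\<close> by simp
    next
      case 2
      then show ?thesis using j unfolding c_def by simp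
    next
      case 3
      then have "\<pi> i = 0" using \<pi>_i j(1) unfolding greedy_weight_eq k_def by auto
      moreover have "u i \<le> c" using rank_decreasing[of k j u] 3 j unfolding c_def by simp
      ultimately show ?thesis using \<open>0 \<le> \<pi>' i\<close> by (simp add: mult_nonneg_nonpos)
    qed
  qed
  have sums: "(\<Sum>i<n. \<pi> i) = 1" "(\<Sum>i<n. \<pi>' i) = 1"
    using smooth_verifier_output assms unfolding \<pi>_def smooth_strategy_def strategy_def by auto
  have "0 \<le> (\<Sum>i<n. (\<pi> i - \<pi>' i) * (u i - c))"
    using term_nonneg by (intro sum_nonneg) auto
  also have "\<dots> = payoff n \<pi> u - payoff n \<pi>' u - c * ((\<Sum>i<n. \<pi> i) - (\<Sum>i<n. \<pi>' i))"
    unfolding payoff_def by (simp add: algebra_simps sum_subtractf sum_distrib_left sum.distrib)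
  finally show ?thesis using sums unfolding \<pi>_def by simp
qed

end

lemma payoff_perturbation_le:
  assumes "strategy n \<pi>" and "\<forall>i<n. \<bar>v i - u i\<bar> \<le> \<delta>"
  shows "\<bar>payoff n \<pi> u - payoff n \<pi> v\<bar> \<le> \<delta>"
proof -
  have "\<bar>payoff n \<pi> u - payoff n \<pi> v\<bar> = \<bar>\<Sum>i<n. \<pi> i * (u i - v i)\<bar>"
    unfolding payoff_def by (simp add: algebra_simps sum_subtractf)
  also have "\<dots> \<le> (\<Sum>i<n. \<pi> i * \<delta>)"
    using assms unfolding strategy_def
    by (intro order.trans[OF sum_abs] sum_mono)
      (auto simp: abs_mult abs_minus_commute intro!: mult_left_mono)
  also have "\<dots> = \<delta>"
    using assms(1) unfolding strategy_def by (simp flip: sum_distrib_right)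
  finally show ?thesis .
qed

lemma (in smooth_setting) verifier_output_eps_opt:
  assumes "\<forall>i<n. \<bar>v i - u i\<bar> \<le> \<delta>" and "2 * \<delta> \<le> \<epsilon>"
  shows "eps_opt_smooth n \<sigma> \<epsilon> u (verifier_output n \<sigma> v)"
  unfolding eps_opt_smooth_def
proof (intro conjI allI impI)
  show "smooth_strategy n \<sigma> (verifier_output n \<sigma> v)" by (rule smooth_verifier_output)
  fix \<pi>' assume \<pi>': "smooth_strategy n \<sigma> \<pi>'"
  have "\<bar>payoff n \<pi>' u - payoff n \<pi>' v\<bar> \<le> \<delta>"
    "\<bar>payoff n (verifier_output n \<sigma> v) u - payoff n (verifier_output n \<sigma> v) v\<bar> \<le> \<delta>"
    using \<pi>' smooth_verifier_output assms(1)
    by (auto intro!: payoff_perturbation_le simp: smooth_strategy_def)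
  moreover have "payoff n \<pi>' v \<le> payoff n (verifier_output n \<sigma> v) v"
    using \<pi>' by (rule verifier_output_optimal)
  ultimately show "payoff n \<pi>' u - payoff n (verifier_output n \<sigma> v) u \<le> \<epsilon>"
    using assms(2) by linarith
qed

lemma insort_key_order_cong:
  "\<forall>y\<in>set ys. (f x \<le> f y) = (g x \<le> g y) \<Longrightarrow> insort_key f x ys = insort_key g x ys"
  by (induction ys) auto

lemma sort_key_order_cong:
  "\<forall>x\<in>set xs. \<forall>y\<in>set xs. (f x \<le> f y) = (g x \<le> g y) \<Longrightarrow> sort_key f xs = sort_key g xs"
proof (induction xs)
  case (Cons a xs)
  then have "sort_key f xs = sort_key g xs" by simp
  moreover have "insort_key f a (sort_key g xs) = insort_key g a (sort_key g xs)"
    using Cons.prems by (intro insort_key_order_cong) (simp add: set_sort)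
  ultimately show ?case by simp
qed simp

lemma verifier_output_order_cong:
  assumes "\<forall>i<n. \<forall>j<n. (u i \<le> u j) = (v i \<le> v j)"
  shows "verifier_output n \<sigma> u = verifier_output n \<sigma> v"
proof -
  have "sort_key (\<lambda>k. - u k) [0..<n] = sort_key (\<lambda>k. - v k) [0..<n]"
    using assms by (intro sort_key_order_cong) auto
  then show ?thesis unfolding verifier_output_def by simp
qed

section \<open>Union bound, product measures and Hoeffding\<close>

lemma (in prob_space) prob_forall_ge:
  assumes "finite I" and "\<And>i. i \<in> I \<Longrightarrow> {x \<in> space M. P i x} \<in> events"
  shows "1 - (\<Sum>i\<in>I. prob {x \<in> space M. \<not> P i x}) \<le> prob {x \<in> space M. \<forall>i\<in>I. P i x}"
proof -
  have bad: "{x \<in> space M. \<not> P i x} \<in> events" if "i \<in> I" for i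
  proof -
    have "{x \<in> space M. \<not> P i x} = space M - {x \<in> space M. P i x}" by auto
    then show ?thesis using assms(2)[OF that] by auto
  qed
  have eq: "{x \<in> space M. \<forall>i\<in>I. P i x} = space M - (\<Union>i\<in>I. {x \<in> space M. \<not> P i x})"
    by auto
  have "prob (\<Union>i\<in>I. {x \<in> space M. \<not> P i x}) \<le> (\<Sum>i\<in>I. prob {x \<in> space M. \<not> P i x})"
    using bad assms(1) by (intro finite_measure_subadditive_finite) auto
  moreover have "(\<Union>i\<in>I. {x \<in> space M. \<not> P i x}) \<in> events"
    using bad assms(1) by (intro sets.finite_UN) auto
  ultimately show ?thesis unfolding eq using prob_compl by fastforce
qed

lemma (in pair_prob_space) prob_Times:
  assumes "A \<in> sets M1" and "B \<in> sets M2"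
  shows "prob (A \<times> B) = M1.prob A * M2.prob B"
proof -
  have "ennreal (prob (A \<times> B)) = ennreal (M1.prob A * M2.prob B)"
    using M2.emeasure_pair_measure_Times[OF assms] assms
    by (simp add: emeasure_eq_measure M1.emeasure_eq_measure M2.emeasure_eq_measure ennreal_mult)
  then show ?thesis by (simp add: measure_nonneg)
qed

lemma (in product_prob_space) measure_PiM_component:
  assumes "i \<in> I" and "{z \<in> space (M i). P z} \<in> sets (M i)"
  shows "measure (PiM I M) {x \<in> space (PiM I M). P (x i)} = measure (M i) {z \<in> space (M i). P z}"
proof -
  have "{x \<in> space (PiM I M). P (x i)} = {x \<in> space (PiM I M). x i \<in> {z \<in> space (M i). P z}}"
    using assms(1) by (auto simp: space_PiM)
  then show ?thesis
    using emeasure_PiM_Collect_single[OF assms]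
    by (simp add: P.emeasure_eq_measure M.emeasure_eq_measure measure_nonneg)
qed

lemma measurable_component_borel:
  assumes "j \<in> I" and "sets (M j) = sets borel"
  shows "(\<lambda>x. x j) \<in> borel_measurable (PiM I M)"
  using measurable_component_singleton[OF assms(1), of M]
    measurable_cong_sets[OF refl assms(2), of "PiM I M"]
  by simp

lemma sets_PiM_Collect_component:
  assumes "i \<in> I" and "{z \<in> space (M i). P z} \<in> sets (M i)"
  shows "{x \<in> space (PiM I M). P (x i)} \<in> sets (PiM I M)"
proof -
  have "{x \<in> space (PiM I M). P (x i)} = (\<lambda>x. x i) -` {z \<in> space (M i). P z} \<inter> space (PiM I M)"
    using assms(1) by (auto simp: space_PiM)
  then show ?thesis using measurable_sets[OF measurable_component_singleton[OF assms(1), of M] assms(2)]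
    by simp
qed

lemma Hoeffding_PiM_mean:
  fixes Q :: "real measure"
  assumes Q: "prob_space Q" "sets Q = sets borel" "measure Q {0..1} = 1"
    and J: "finite J" "J \<noteq> {}" and "t \<ge> 0"
  shows "measure (PiM J (\<lambda>_. Q)) {x \<in> space (PiM J (\<lambda>_. Q)).
            t \<le> \<bar>(\<Sum>j\<in>J. x j) / real (card J) - (\<integral>y. y \<partial>Q)\<bar>}
         \<le> 2 * exp (- 2 * real (card J) * t\<^sup>2)"
proof -
  let ?M = "PiM J (\<lambda>_. Q)"
  interpret M: prob_space ?M by (rule prob_space_PiM) (use Q in auto)
  obtain j0 where j0: "j0 \<in> J" using J by auto
  have meas: "(\<lambda>x. x j) \<in> borel_measurable ?M" if "j \<in> J" for j
    using measurable_component_borel[OF that, of "\<lambda>_. Q"] Q(2) by simp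
  have distr_component: "distr ?M borel (\<lambda>x. x j) = Q" if "j \<in> J" for j
  proof -
    have "distr ?M borel (\<lambda>x. x j) = distr ?M Q (\<lambda>x. x j)" by (rule distr_cong) (use Q in auto)
    also have "\<dots> = Q" by (rule distr_PiM_component) (use Q that in auto)
    finally show ?thesis .
  qed
  have indep: "M.indep_vars (\<lambda>_. borel) (\<lambda>j x. x j) J"
  proof (subst M.indep_vars_iff_distr_eq_PiM')
    show "J \<noteq> {}" and "\<And>j. j \<in> J \<Longrightarrow> (\<lambda>x. x j) \<in> measurable ?M borel" using J meas by auto
    have "PiM J (\<lambda>i. distr ?M borel (\<lambda>x. x i)) = ?M"
      by (rule PiM_cong) (auto simp: distr_component)
    moreover have "distr ?M (PiM J (\<lambda>_. borel)) (\<lambda>x. \<lambda>i\<in>J. x i) = distr ?M ?M (\<lambda>x. x)"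
      by (rule distr_cong) (auto simp: Q(2) space_PiM intro!: sets_PiM_cong)
    ultimately show "distr ?M (PiM J (\<lambda>_. borel)) (\<lambda>x. \<lambda>i\<in>J. x i) =
        PiM J (\<lambda>i. distr ?M borel (\<lambda>x. x i))"
      by simp
  qed
  have "AE x in ?M. x j0 \<in> {0..1}"
  proof (rule AE_PiM_component)
    show "AE x in Q. x \<in> {0..1}" using Q by (intro prob_space.AE_prob_1) auto
  qed (use Q j0 in auto)
  then interpret H: Hoeffding_ineq_iid ?M J "\<lambda>j x. x j" "\<lambda>x. x j0" 0 1 "M.expectation (\<lambda>x. x j0)"
    by unfold_locales (use J indep distr_component meas j0 in auto)
  have "(\<integral>y. y \<partial>Q) = M.expectation (\<lambda>x. x j0)"
    using integral_distr[OF meas[OF j0], of "\<lambda>y. y"] distr_component[OF j0] by simp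
  then show ?thesis using H.Hoeffding_ineq_abs_ge'[OF \<open>t \<ge> 0\<close> _ J(2)] by simp
qed

text \<open>A predicate of a real vector that only depends on the order pattern of its coordinates
  takes finitely many shapes, so the event is a finite union of measurable comparisons.\<close>
lemma sets_Collect_order_invariant:
  fixes g :: "'a \<Rightarrow> nat \<Rightarrow> real" and F :: "(nat \<Rightarrow> real) \<Rightarrow> bool"
  assumes inv: "\<And>u v. \<forall>i<n. \<forall>j<n. (u i \<le> u j) = (v i \<le> v j) \<Longrightarrow> F u = F v"
    and meas: "\<And>i. i < n \<Longrightarrow> (\<lambda>x. g x i) \<in> borel_measurable M"
  shows "{x \<in> space M. F (g x)} \<in> sets M"
proof -
  define B where "B = {..<n} \<times> {..<n}"
  define pattern where "pattern = (\<lambda>u::nat \<Rightarrow> real. \<lambda>p\<in>B. u (fst p) \<le> u (snd p))"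
  define A where "A = pattern ` {u. F u}"
  have "finite B" unfolding B_def by simp
  have "A \<subseteq> B \<rightarrow>\<^sub>E UNIV" unfolding A_def pattern_def by auto
  then have "finite A" using \<open>finite B\<close> by (rule finite_subset[OF _ finite_PiE]) auto
  have "F u \<longleftrightarrow> pattern u \<in> A" for u
  proof
    assume "pattern u \<in> A"
    then obtain v where "F v" "pattern u = pattern v" unfolding A_def by auto
    then have "\<forall>i<n. \<forall>j<n. (u i \<le> u j) = (v i \<le> v j)"
      unfolding pattern_def B_def by (metis (no_types, lifting) lessThan_iff mem_Sigma_iff
        restrict_apply' fst_conv snd_conv)
    then show "F u" using inv \<open>F v\<close> by blast
  qed (auto simp: A_def)
  then have "{x \<in> space M. F (g x)} = (\<Union>a\<in>A. {x \<in> space M. pattern (g x) = a})" by auto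
  moreover have "{x \<in> space M. pattern (g x) = a} \<in> sets M" if "a \<in> A" for a
  proof -
    have "a \<in> B \<rightarrow>\<^sub>E UNIV" using that \<open>A \<subseteq> B \<rightarrow>\<^sub>E UNIV\<close> by auto
    then have "{x \<in> space M. pattern (g x) = a} =
        {x \<in> space M. \<forall>p\<in>B. (g x (fst p) \<le> g x (snd p)) = a p}"
      unfolding pattern_def by (auto simp: PiE_iff extensional_def fun_eq_iff)
    also have "\<dots> \<in> sets M"
    proof (rule sets.sets_Collect_finite_All[OF _ \<open>finite B\<close>])
      fix p assume "p \<in> B"
      then have [measurable]: "(\<lambda>x. g x (fst p)) \<in> borel_measurable M"
          "(\<lambda>x. g x (snd p)) \<in> borel_measurable M"
        using meas unfolding B_def by auto
      show "{x \<in> space M. (g x (fst p) \<le> g x (snd p)) = a p} \<in> sets M" by measurable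
    qed
    finally show ?thesis .
  qed
  ultimately show ?thesis using \<open>finite A\<close> by (auto intro: sets.finite_UN)
qed

section \<open>Protocol parameters\<close>

lemma Hoeffding_tail_le:
  fixes k :: nat and e X :: real
  assumes "e > 0" and "X > 0" and "128 * ln X / e\<^sup>2 \<le> real k"
  shows "2 * exp (- 2 * real k * (e / 16)\<^sup>2) \<le> 2 / X"
proof -
  have "128 * ln X \<le> real k * e\<^sup>2" using assms by (simp add: field_simps)
  then have "- 2 * real k * (e / 16)\<^sup>2 \<le> - ln X" by (simp add: power2_eq_square field_simps)
  then have "exp (- 2 * real k * (e / 16)\<^sup>2) \<le> exp (- ln X)" by simp
  also have "exp (- ln X) = 1 / X" using assms(2) by (simp add: exp_minus inverse_eq_divide)
  finally show ?thesis by simp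
qed

lemma proto_kP_tail:
  assumes "n > 0" and "0 < \<epsilon>" and "\<epsilon> < 1"
  shows "0 < proto_kP n \<epsilon>"
    and "2 * exp (- 2 * real (proto_kP n \<epsilon>) * (\<epsilon> / 16)\<^sup>2) \<le> \<epsilon> / (6 * real n)"
proof -
  have X: "1 < 12 * real n / \<epsilon>" using assms by (simp add: field_simps)
  have k: "128 * ln (12 * real n / \<epsilon>) / \<epsilon>\<^sup>2 \<le> real (proto_kP n \<epsilon>)"
    unfolding proto_kP_def by (rule real_nat_ceiling_ge)
  moreover have "0 < 128 * ln (12 * real n / \<epsilon>) / \<epsilon>\<^sup>2" using X assms(2) by simp
  ultimately show "0 < proto_kP n \<epsilon>" by linarith
  have "2 * exp (- 2 * real (proto_kP n \<epsilon>) * (\<epsilon> / 16)\<^sup>2) \<le> 2 / (12 * real n / \<epsilon>)"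
    using Hoeffding_tail_le[OF assms(2) _ k] X by simp
  also have "\<dots> = \<epsilon> / (6 * real n)" using assms by (simp add: field_simps)
  finally show "2 * exp (- 2 * real (proto_kP n \<epsilon>) * (\<epsilon> / 16)\<^sup>2) \<le> \<epsilon> / (6 * real n)" .
qed

lemma protoL_gt_2: "0 < \<epsilon> \<Longrightarrow> \<epsilon> < 1 \<Longrightarrow> 2 < protoL \<epsilon>"
  unfolding protoL_def by simp

lemma protoBmax_le_protoL:
  assumes "0 < \<epsilon>" and "\<epsilon> < 1"
  shows "real (protoBmax \<epsilon>) + 1 \<le> protoL \<epsilon>"
proof -
  have "0 < log 4 (1/\<epsilon>)" using assms by simp
  then have "real (protoBmax \<epsilon>) = of_int \<lceil>log 4 (1/\<epsilon>)\<rceil>" unfolding protoBmax_def by simp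
  then show ?thesis unfolding protoL_def by linarith
qed

lemma proto_eps_ge: "0 < \<epsilon> \<Longrightarrow> \<epsilon> \<le> proto_eps \<epsilon> b"
  unfolding proto_eps_def by (simp add: mult_le_cancel_left1)

lemma proto_a_pos:
  assumes "n > 0" and "\<sigma> > 0" and "0 < \<epsilon>" and "\<epsilon> < 1"
  shows "0 < proto_a n \<sigma> \<epsilon> b"
proof -
  have "0 < 4 ^ b * 4 * real n * \<sigma> * protoL \<epsilon> * ln 6"
    using assms protoL_gt_2[of \<epsilon>] by simp
  then show ?thesis unfolding proto_a_def by simp
qed

lemma proto_m_tail:
  assumes "n > 0" and "\<sigma> > 0" and "0 < \<epsilon>" and "\<epsilon> < 1"
  shows "0 < proto_m n \<sigma> \<epsilon> b"
    and "2 * exp (- 2 * real (proto_m n \<sigma> \<epsilon> b) * (proto_eps \<epsilon> b / 16)\<^sup>2)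
           \<le> 1 / (6 * protoL \<epsilon> * real (proto_a n \<sigma> \<epsilon> b))"
proof -
  let ?X = "12 * protoL \<epsilon> * real (proto_a n \<sigma> \<epsilon> b)"
  have "protoL \<epsilon> * 1 \<le> protoL \<epsilon> * real (proto_a n \<sigma> \<epsilon> b)"
    using proto_a_pos[OF assms, of b] protoL_gt_2[OF assms(3,4)] by (intro mult_left_mono) auto
  then have X: "1 < ?X" using protoL_gt_2[OF assms(3,4)] by linarith
  have eb: "0 < proto_eps \<epsilon> b" unfolding proto_eps_def using assms(3) by simp
  have m: "128 * ln ?X / (proto_eps \<epsilon> b)\<^sup>2 \<le> real (proto_m n \<sigma> \<epsilon> b)"
    unfolding proto_m_def by (rule real_nat_ceiling_ge)
  moreover have "0 < 128 * ln ?X / (proto_eps \<epsilon> b)\<^sup>2" using X eb by simp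
  ultimately show "0 < proto_m n \<sigma> \<epsilon> b" by linarith
  show "2 * exp (- 2 * real (proto_m n \<sigma> \<epsilon> b) * (proto_eps \<epsilon> b / 16)\<^sup>2)
           \<le> 1 / (6 * protoL \<epsilon> * real (proto_a n \<sigma> \<epsilon> b))"
    using Hoeffding_tail_le[OF eb _ m] X by simp
qed

definition verifier_tests :: "nat \<Rightarrow> real \<Rightarrow> real \<Rightarrow> (nat \<times> nat) set" where
  "verifier_tests n \<sigma> \<epsilon> = (SIGMA b:{..protoBmax \<epsilon>}. {..<proto_a n \<sigma> \<epsilon> b})"

lemma finite_verifier_tests: "finite (verifier_tests n \<sigma> \<epsilon>)"
  unfolding verifier_tests_def by auto

text \<open>The test budgets \<open>a\<^sub>b\<close> are chosen so that every level \<open>b\<close> contributes \<open>1/(6 L)\<close>,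
  and there are at most \<open>L\<close> levels.\<close>
lemma sum_verifier_tests_tail_le:
  assumes "n > 0" and "\<sigma> > 0" and "0 < \<epsilon>" and "\<epsilon> < 1"
  shows "(\<Sum>p\<in>verifier_tests n \<sigma> \<epsilon>. 1 / (6 * protoL \<epsilon> * real (proto_a n \<sigma> \<epsilon> (fst p)))) \<le> 1 / 6"
proof -
  have "(\<Sum>p\<in>verifier_tests n \<sigma> \<epsilon>. 1 / (6 * protoL \<epsilon> * real (proto_a n \<sigma> \<epsilon> (fst p))))
      = (\<Sum>b\<le>protoBmax \<epsilon>. \<Sum>t<proto_a n \<sigma> \<epsilon> b. 1 / (6 * protoL \<epsilon> * real (proto_a n \<sigma> \<epsilon> b)))"
    unfolding verifier_tests_def by (subst sum.Sigma) (auto simp: split_beta)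
  also have "\<dots> = (\<Sum>b\<le>protoBmax \<epsilon>. 1 / (6 * protoL \<epsilon>))"
    using proto_a_pos[OF assms] protoL_gt_2[OF assms(3,4)] by (intro sum.cong refl) simp
  also have "\<dots> = (real (protoBmax \<epsilon>) + 1) / (6 * protoL \<epsilon>)" by simp
  also have "\<dots> \<le> 1 / 6"
    using protoBmax_le_protoL[OF assms(3,4)] protoL_gt_2[OF assms(3,4)] by (simp add: field_simps)
  finally show ?thesis .
qed

section \<open>The prover\<close>

lemma banditD:
  assumes "bandit n q" and "i < n"
  shows "prob_space (q i)" and "sets (q i) = sets borel" and "measure (q i) {0..1} = 1"
  using assms unfolding bandit_def by auto

lemma borel_measurable_prover_msg:
  assumes "bandit n q"
  shows "(\<lambda>x. prover_msg n \<epsilon> x i) \<in> borel_measurable (prover_space n \<epsilon> q)"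
proof -
  have "(\<lambda>x. x (i, k)) \<in> borel_measurable (prover_space n \<epsilon> q)" for k
  proof (cases "(i, k) \<in> {..<n} \<times> {..<proto_kP n \<epsilon>}")
    case True
    then show ?thesis
      using banditD(2)[OF assms] unfolding prover_space_def
      by (intro measurable_component_borel) auto
  next
    case False
    \<comment> \<open>\<open>PiM\<close> sets coordinates outside its index set to \<open>undefined\<close>\<close>
    have undef: "x (i, k) = undefined" if "x \<in> space (prover_space n \<epsilon> q)" for x
      using that unfolding prover_space_def space_PiM by (rule PiE_arb[OF _ False])
    show ?thesis by (subst measurable_cong[OF undef]) auto
  qed
  then show ?thesis unfolding prover_msg_def by measurable
qed

lemma prob_space_prover_space: "bandit n q \<Longrightarrow> prob_space (prover_space n \<epsilon> q)"
  unfolding prover_space_def using banditD(1) by (intro prob_space_PiM) auto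

lemma prover_msg_deviation_le:
  assumes "bandit n q" and "i < n" and "proto_kP n \<epsilon> > 0" and "t \<ge> 0"
  shows "measure (prover_space n \<epsilon> q) {x \<in> space (prover_space n \<epsilon> q).
           t \<le> \<bar>prover_msg n \<epsilon> x i - arm_mean q i\<bar>} \<le> 2 * exp (- 2 * real (proto_kP n \<epsilon>) * t\<^sup>2)"
proof -
  define k where "k = proto_kP n \<epsilon>"
  define K where "K = {..<n} \<times> {..<k}"
  define M where "M = (\<lambda>p::nat \<times> nat. q (fst p))"
  define arm where "arm = (\<lambda>\<omega>::nat \<times> nat \<Rightarrow> real. \<lambda>j\<in>{..<k}. \<omega> (i, j))"
  note Q = banditD[OF assms(1,2)]
  have PS: "prover_space n \<epsilon> q = PiM K M" unfolding prover_space_def K_def M_def k_def by simp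
  have distr_arm: "distr (PiM K M) (PiM {..<k} (\<lambda>_. q i)) arm = PiM {..<k} (\<lambda>_. q i)"
    using distr_PiM_reindex[of K M "\<lambda>j. (i, j)" "{..<k}"] banditD(1)[OF assms(1)] assms(2)
    unfolding arm_def M_def K_def by (auto simp: inj_on_def)
  have arm_meas: "arm \<in> measurable (PiM K M) (PiM {..<k} (\<lambda>_. q i))"
    unfolding arm_def
  proof (rule measurable_restrict)
    fix j assume "j \<in> {..<k}"
    then have "(i, j) \<in> K" using assms(2) unfolding K_def by auto
    then show "(\<lambda>x. x (i, j)) \<in> measurable (PiM K M) (q i)"
      using measurable_component_singleton[of "(i, j)" K M] unfolding M_def by simp
  qed
  define S where "S = {y \<in> space (PiM {..<k} (\<lambda>_. q i)).
            t \<le> \<bar>(\<Sum>j\<in>{..<k}. y j) / real (card {..<k}) - (\<integral>y. y \<partial>q i)\<bar>}"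
  have "(\<lambda>y. y j) \<in> borel_measurable (PiM {..<k} (\<lambda>_. q i))" if "j < k" for j
    using that Q(2) by (intro measurable_component_borel) auto
  then have S_sets: "S \<in> sets (PiM {..<k} (\<lambda>_. q i))" unfolding S_def by measurable
  have "{x \<in> space (prover_space n \<epsilon> q). t \<le> \<bar>prover_msg n \<epsilon> x i - arm_mean q i\<bar>} =
      arm -` S \<inter> space (PiM K M)"
    using measurable_space[OF arm_meas]
    unfolding S_def PS prover_msg_def arm_mean_def k_def[symmetric] arm_def by auto
  also have "measure (PiM K M) \<dots> = measure (PiM {..<k} (\<lambda>_. q i)) S"
    by (subst distr_arm[symmetric]) (rule measure_distr[OF arm_meas S_sets, symmetric])
  also have "\<dots> \<le> 2 * exp (- 2 * real k * t\<^sup>2)"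
    unfolding S_def using assms(3,4) Q by (intro order.trans[OF Hoeffding_PiM_mean]) (auto simp: k_def)
  finally show ?thesis unfolding PS k_def .
qed

definition prover_accurate :: "nat \<Rightarrow> real \<Rightarrow> (nat \<Rightarrow> real measure) \<Rightarrow> (nat \<times> nat \<Rightarrow> real) \<Rightarrow> bool" where
  "prover_accurate n \<epsilon> q x \<longleftrightarrow> (\<forall>i\<in>{..<n}. \<bar>prover_msg n \<epsilon> x i - arm_mean q i\<bar> < \<epsilon> / 16)"

lemma sets_prover_accurate:
  "bandit n q \<Longrightarrow> {x \<in> space (prover_space n \<epsilon> q). prover_accurate n \<epsilon> q x} \<in> sets (prover_space n \<epsilon> q)"
  using borel_measurable_prover_msg unfolding prover_accurate_def by measurable

lemma prover_accurate_prob: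
  assumes "n > 0" and "0 < \<epsilon>" and "\<epsilon> < 1" and "bandit n q"
  shows "1 - \<epsilon> / 6 \<le> measure (prover_space n \<epsilon> q)
           {x \<in> space (prover_space n \<epsilon> q). prover_accurate n \<epsilon> q x}"
proof -
  interpret prob_space "prover_space n \<epsilon> q" using assms(4) by (rule prob_space_prover_space)
  let ?ok = "\<lambda>i x. \<bar>prover_msg n \<epsilon> x i - arm_mean q i\<bar> < \<epsilon> / 16"
  have arm_fails: "prob {x \<in> space (prover_space n \<epsilon> q). \<not> ?ok i x} \<le> \<epsilon> / (6 * real n)"
    if "i < n" for i
  proof -
    have "prob {x \<in> space (prover_space n \<epsilon> q). \<epsilon> / 16 \<le> \<bar>prover_msg n \<epsilon> x i - arm_mean q i\<bar>}
        \<le> 2 * exp (- 2 * real (proto_kP n \<epsilon>) * (\<epsilon> / 16)\<^sup>2)"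
      using assms that proto_kP_tail(1) by (intro prover_msg_deviation_le) auto
    then show ?thesis using proto_kP_tail(2)[OF assms(1-3)] by (simp add: not_less)
  qed
  have events: "{x \<in> space (prover_space n \<epsilon> q). ?ok i x} \<in> events" for i
    using borel_measurable_prover_msg[OF assms(4)] by measurable
  have "(\<Sum>i<n. prob {x \<in> space (prover_space n \<epsilon> q). \<not> ?ok i x}) \<le> (\<Sum>i<n. \<epsilon> / (6 * real n))"
    using arm_fails by (intro sum_mono) simp
  also have "\<dots> = \<epsilon> / 6" using assms(1) by simp
  moreover have "1 - (\<Sum>i<n. prob {x \<in> space (prover_space n \<epsilon> q). \<not> ?ok i x})
      \<le> prob {x \<in> space (prover_space n \<epsilon> q). \<forall>i\<in>{..<n}. ?ok i x}"
    using events by (intro prob_forall_ge) auto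
  ultimately show ?thesis unfolding prover_accurate_def by linarith
qed

section \<open>The verifier\<close>

definition test_outcome_space :: "nat \<Rightarrow> (nat \<times> (nat \<Rightarrow> real)) measure" where
  "test_outcome_space m = count_space UNIV \<Otimes>\<^sub>M (\<Pi>\<^sub>M j \<in> {..<m}. borel)"

definition arm_pulls :: "(nat \<Rightarrow> real measure) \<Rightarrow> nat \<Rightarrow> nat \<Rightarrow> (nat \<times> (nat \<Rightarrow> real)) measure" where
  "arm_pulls q m i = distr (\<Pi>\<^sub>M j \<in> {..<m}. q i) (test_outcome_space m) (\<lambda>ys. (i, ys))"

lemma verifier_step_eq_bind: "verifier_step n q m = uniform_count_measure {..<n} \<bind> arm_pulls q m"
  unfolding verifier_step_def arm_pulls_def test_outcome_space_def ..

definition sample_accurate :: "nat \<Rightarrow> (nat \<Rightarrow> real measure) \<Rightarrow> nat \<Rightarrow> real \<Rightarrow> nat \<times> (nat \<Rightarrow> real) \<Rightarrow> bool" where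
  "sample_accurate n q m t z \<longleftrightarrow> fst z < n \<and> \<bar>(\<Sum>j<m. snd z j) / real m - arm_mean q (fst z)\<bar> < t"

lemma measurable_test_arm: "fst \<in> test_outcome_space m \<rightarrow>\<^sub>M count_space UNIV"
  unfolding test_outcome_space_def by simp

lemma borel_measurable_test_pull:
  "j < m \<Longrightarrow> (\<lambda>z. snd z j) \<in> borel_measurable (test_outcome_space m)"
  unfolding test_outcome_space_def
  by (intro measurable_compose[OF measurable_snd measurable_component_singleton]) auto

lemma sets_sample_accurate:
  "{z \<in> space (test_outcome_space m). sample_accurate n q m t z} \<in> sets (test_outcome_space m)"
  using measurable_test_arm borel_measurable_test_pull
  unfolding sample_accurate_def by measurable

context
  fixes n :: nat and q :: "nat \<Rightarrow> real measure" and m :: nat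
  assumes bandit: "bandit n q" and n_pos: "n > 0"
begin

lemma measurable_label_arm:
  assumes "i < n"
  shows "(\<lambda>ys. (i, ys)) \<in> (\<Pi>\<^sub>M j \<in> {..<m}. q i) \<rightarrow>\<^sub>M test_outcome_space m"
  unfolding test_outcome_space_def
proof (rule measurable_Pair)
  have "sets (\<Pi>\<^sub>M j \<in> {..<m}. q i) = sets (\<Pi>\<^sub>M j \<in> {..<m}. (borel :: real measure))"
    using banditD(2)[OF bandit assms] by (intro sets_PiM_cong) auto
  then show "(\<lambda>ys. ys) \<in> (\<Pi>\<^sub>M j \<in> {..<m}. q i) \<rightarrow>\<^sub>M (\<Pi>\<^sub>M j \<in> {..<m}. borel)"
    by (rule measurable_ident_sets)
qed simp

lemma measurable_arm_pulls:
  "arm_pulls q m \<in> uniform_count_measure {..<n} \<rightarrow>\<^sub>M prob_algebra (test_outcome_space m)"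
proof -
  have "arm_pulls q m i \<in> space (prob_algebra (test_outcome_space m))" if "i < n" for i
    unfolding space_prob_algebra arm_pulls_def
    using banditD(1)[OF bandit that] measurable_label_arm[OF that]
    by (auto intro!: prob_space.prob_space_distr prob_space_PiM)
  moreover have "uniform_count_measure {..<n} \<rightarrow>\<^sub>M prob_algebra (test_outcome_space m) =
      count_space {..<n} \<rightarrow>\<^sub>M prob_algebra (test_outcome_space m)"
    by (intro measurable_cong_sets) (auto simp: sets_uniform_count_measure)
  ultimately show ?thesis by auto
qed

lemma prob_algebra_uniform_count_measure:
  "uniform_count_measure {..<n} \<in> space (prob_algebra (uniform_count_measure {..<n}))"
  unfolding space_prob_algebra using n_pos by (auto intro!: prob_space_uniform_count_measure)

lemma prob_space_verifier_step: "prob_space (verifier_step n q m)"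
  unfolding verifier_step_eq_bind
  by (rule prob_space_bind'[OF prob_algebra_uniform_count_measure measurable_arm_pulls])

lemma sets_verifier_step: "sets (verifier_step n q m) = sets (test_outcome_space m)"
  unfolding verifier_step_eq_bind
  by (rule sets_bind'[OF prob_algebra_uniform_count_measure measurable_arm_pulls])

lemma space_verifier_step: "space (verifier_step n q m) = space (test_outcome_space m)"
  using sets_verifier_step by (rule sets_eq_imp_space_eq)

lemma sets_verifier_step_sample_accurate:
  "{z \<in> space (verifier_step n q m). sample_accurate n q m t z} \<in> sets (verifier_step n q m)"
  unfolding space_verifier_step sets_verifier_step by (rule sets_sample_accurate)

lemma arm_pulls_inaccurate_le:
  assumes "i < n" and "m > 0" and "t \<ge> 0"
  shows "emeasure (arm_pulls q m i) {z \<in> space (test_outcome_space m). \<not> sample_accurate n q m t z}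
           \<le> ennreal (2 * exp (- 2 * real m * t\<^sup>2))"
proof -
  let ?bad = "{z \<in> space (test_outcome_space m). \<not> sample_accurate n q m t z}"
  let ?pulls = "\<Pi>\<^sub>M j \<in> {..<m}. q i"
  note Q = banditD[OF bandit assms(1)]
  interpret Pulls: prob_space ?pulls using Q(1) by (rule prob_space_PiM)
  have "?bad \<in> sets (test_outcome_space m)"
    using sets_sample_accurate by measurable
  then have "emeasure (arm_pulls q m i) ?bad = emeasure ?pulls ((\<lambda>ys. (i, ys)) -` ?bad \<inter> space ?pulls)"
    unfolding arm_pulls_def by (rule emeasure_distr[OF measurable_label_arm[OF assms(1)]])
  also have "(\<lambda>ys. (i, ys)) -` ?bad \<inter> space ?pulls =
       {x \<in> space ?pulls. t \<le> \<bar>(\<Sum>j\<in>{..<m}. x j) / real (card {..<m}) - (\<integral>y. y \<partial>q i)\<bar>}"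
    using assms(1) measurable_space[OF measurable_label_arm[OF assms(1)]]
    unfolding sample_accurate_def arm_mean_def by auto
  also have "emeasure ?pulls \<dots> \<le> ennreal (2 * exp (- 2 * real m * t\<^sup>2))"
    unfolding Pulls.emeasure_eq_measure using Hoeffding_PiM_mean[OF Q, of "{..<m}" t] assms(2,3)
    by (intro ennreal_leI) auto
  finally show ?thesis .
qed

lemma verifier_step_inaccurate_le:
  assumes "m > 0" and "t \<ge> 0"
  shows "measure (verifier_step n q m) {z \<in> space (verifier_step n q m). \<not> sample_accurate n q m t z}
           \<le> 2 * exp (- 2 * real m * t\<^sup>2)"
proof -
  let ?bad = "{z \<in> space (test_outcome_space m). \<not> sample_accurate n q m t z}"
  let ?tail = "2 * exp (- 2 * real m * t\<^sup>2)"
  have "?bad \<in> sets (test_outcome_space m)"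
    using sets_sample_accurate by measurable
  then have "emeasure (verifier_step n q m) ?bad =
      (\<integral>\<^sup>+i. emeasure (arm_pulls q m i) ?bad \<partial>uniform_count_measure {..<n})"
    unfolding verifier_step_eq_bind
    by (rule emeasure_bind_prob_algebra[OF prob_algebra_uniform_count_measure measurable_arm_pulls])
  also have "\<dots> \<le> (\<integral>\<^sup>+i. ennreal ?tail \<partial>uniform_count_measure {..<n})"
    using arm_pulls_inaccurate_le assms
    by (intro nn_integral_mono) (simp add: space_uniform_count_measure)
  also have "\<dots> = ennreal ?tail"
  proof -
    have "emeasure (uniform_count_measure {..<n}) (space (uniform_count_measure {..<n})) = 1"
      using n_pos by (intro prob_space.emeasure_space_1 prob_space_uniform_count_measure) auto
    then show ?thesis by simp
  qed
  finally show ?thesis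
    using finite_measure.emeasure_eq_measure[OF prob_space.finite_measure[OF prob_space_verifier_step]]
    unfolding space_verifier_step by simp
qed

end

lemma verifier_space_eq_PiM:
  "verifier_space n \<sigma> \<epsilon> q =
     PiM (verifier_tests n \<sigma> \<epsilon>) (\<lambda>p. verifier_step n q (proto_m n \<sigma> \<epsilon> (fst p)))"
  unfolding verifier_space_def verifier_tests_def ..

definition verifier_accurate ::
    "nat \<Rightarrow> real \<Rightarrow> real \<Rightarrow> (nat \<Rightarrow> real measure) \<Rightarrow> (nat \<times> nat \<Rightarrow> nat \<times> (nat \<Rightarrow> real)) \<Rightarrow> bool" where
  "verifier_accurate n \<sigma> \<epsilon> q v \<longleftrightarrow>
     (\<forall>p\<in>verifier_tests n \<sigma> \<epsilon>.
        sample_accurate n q (proto_m n \<sigma> \<epsilon> (fst p)) (proto_eps \<epsilon> (fst p) / 16) (v p))"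

lemma sets_verifier_accurate:
  assumes "bandit n q" and "n > 0"
  shows "{v \<in> space (verifier_space n \<sigma> \<epsilon> q). verifier_accurate n \<sigma> \<epsilon> q v} \<in> sets (verifier_space n \<sigma> \<epsilon> q)"
  unfolding verifier_accurate_def verifier_space_eq_PiM
  by (intro sets.sets_Collect_finite_All finite_verifier_tests sets_PiM_Collect_component
      sets_verifier_step_sample_accurate[OF assms])

lemma verifier_accurate_prob:
  assumes "n > 0" and "\<sigma> > 0" and "0 < \<epsilon>" and "\<epsilon> < 1" and "bandit n q"
  shows "5 / 6 \<le> measure (verifier_space n \<sigma> \<epsilon> q)
           {v \<in> space (verifier_space n \<sigma> \<epsilon> q). verifier_accurate n \<sigma> \<epsilon> q v}"
proof -
  let ?T = "verifier_tests n \<sigma> \<epsilon>" and ?m = "\<lambda>p. proto_m n \<sigma> \<epsilon> (fst p)"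
  let ?M = "\<lambda>p. verifier_step n q (?m p)"
  let ?ok = "\<lambda>p. sample_accurate n q (?m p) (proto_eps \<epsilon> (fst p) / 16)"
  interpret product_prob_space ?M ?T
    using prob_space_verifier_step[OF assms(5,1)]
    by (simp add: product_prob_space_def product_sigma_finite_def product_prob_space_axioms_def
        prob_space_imp_sigma_finite)
  have test_fails: "prob {v \<in> space (PiM ?T ?M). \<not> ?ok p (v p)}
      \<le> 1 / (6 * protoL \<epsilon> * real (proto_a n \<sigma> \<epsilon> (fst p)))" if p: "p \<in> ?T" for p
  proof -
    have "{z \<in> space (?M p). \<not> ?ok p z} \<in> sets (?M p)"
      using sets_verifier_step_sample_accurate[OF assms(5,1)] by measurable
    then have "prob {v \<in> space (PiM ?T ?M). \<not> ?ok p (v p)} = measure (?M p) {z \<in> space (?M p). \<not> ?ok p z}"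
      by (rule measure_PiM_component[OF p])
    also have "\<dots> \<le> 2 * exp (- 2 * real (?m p) * (proto_eps \<epsilon> (fst p) / 16)\<^sup>2)"
      using proto_m_tail(1)[OF assms(1-4)] proto_eps_ge[OF assms(3)] assms(3)
      by (intro verifier_step_inaccurate_le[OF assms(5,1)]) (auto intro: order.trans[of 0 \<epsilon>])
    also have "\<dots> \<le> 1 / (6 * protoL \<epsilon> * real (proto_a n \<sigma> \<epsilon> (fst p)))"
      by (rule proto_m_tail(2)[OF assms(1-4)])
    finally show ?thesis .
  qed
  have events: "{v \<in> space (PiM ?T ?M). ?ok p (v p)} \<in> sets (PiM ?T ?M)" if "p \<in> ?T" for p
    using that sets_verifier_step_sample_accurate[OF assms(5,1)] by (rule sets_PiM_Collect_component)
  have "(\<Sum>p\<in>?T. prob {v \<in> space (PiM ?T ?M). \<not> ?ok p (v p)})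
      \<le> (\<Sum>p\<in>?T. 1 / (6 * protoL \<epsilon> * real (proto_a n \<sigma> \<epsilon> (fst p))))"
    by (rule sum_mono) (rule test_fails)
  also have "\<dots> \<le> 1 / 6" by (rule sum_verifier_tests_tail_le[OF assms(1-4)])
  moreover have "1 - (\<Sum>p\<in>?T. prob {v \<in> space (PiM ?T ?M). \<not> ?ok p (v p)})
      \<le> prob {v \<in> space (PiM ?T ?M). \<forall>p\<in>?T. ?ok p (v p)}"
    by (intro P.prob_forall_ge finite_verifier_tests events)
  ultimately show ?thesis unfolding verifier_accurate_def verifier_space_eq_PiM by linarith
qed

lemma prob_space_verifier_space:
  "bandit n q \<Longrightarrow> n > 0 \<Longrightarrow> prob_space (verifier_space n \<sigma> \<epsilon> q)"
  unfolding verifier_space_eq_PiM by (intro prob_space_PiM prob_space_verifier_step)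

section \<open>Success of the protocol\<close>

lemma verifier_accepts_iff:
  "verifier_accepts n \<sigma> \<epsilon> u v \<longleftrightarrow>
     (\<forall>p\<in>verifier_tests n \<sigma> \<epsilon>. \<bar>u (fst (v p)) -
        (\<Sum>j<proto_m n \<sigma> \<epsilon> (fst p). snd (v p) j) / real (proto_m n \<sigma> \<epsilon> (fst p))\<bar>
        \<le> proto_eps \<epsilon> (fst p) / 8)"
  unfolding verifier_accepts_def verifier_tests_def by auto

lemma borel_measurable_protocol_msg:
  "bandit n q \<Longrightarrow> (\<lambda>\<omega>. prover_msg n \<epsilon> (fst \<omega>) i) \<in> borel_measurable (protocol_space n \<sigma> \<epsilon> q)"
  unfolding protocol_space_def by (rule measurable_compose[OF measurable_fst borel_measurable_prover_msg])

lemma sets_verifier_accepts: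
  assumes "bandit n q" and "n > 0"
  shows "{\<omega> \<in> space (protocol_space n \<sigma> \<epsilon> q). verifier_accepts n \<sigma> \<epsilon> (prover_msg n \<epsilon> (fst \<omega>)) (snd \<omega>)}
           \<in> sets (protocol_space n \<sigma> \<epsilon> q)"
  unfolding verifier_accepts_iff
proof (rule sets.sets_Collect_finite_All[OF _ finite_verifier_tests])
  fix p assume p: "p \<in> verifier_tests n \<sigma> \<epsilon>"
  let ?m = "proto_m n \<sigma> \<epsilon> (fst p)"
  have "(\<lambda>v. v p) \<in> verifier_space n \<sigma> \<epsilon> q \<rightarrow>\<^sub>M test_outcome_space ?m"
    using measurable_component_singleton[OF p, of "\<lambda>p. verifier_step n q (proto_m n \<sigma> \<epsilon> (fst p))"]
    unfolding verifier_space_eq_PiM measurable_cong_sets[OF refl sets_verifier_step[OF assms]] .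
  then have test: "(\<lambda>\<omega>. snd \<omega> p) \<in> protocol_space n \<sigma> \<epsilon> q \<rightarrow>\<^sub>M test_outcome_space ?m"
    unfolding protocol_space_def by (rule measurable_compose[OF measurable_snd])
  have arm: "(\<lambda>\<omega>. fst (snd \<omega> p)) \<in> protocol_space n \<sigma> \<epsilon> q \<rightarrow>\<^sub>M count_space UNIV"
    using measurable_compose[OF test measurable_test_arm] .
  have "(\<lambda>\<omega>. snd (snd \<omega> p) j) \<in> borel_measurable (protocol_space n \<sigma> \<epsilon> q)" if "j < ?m" for j
    using measurable_compose[OF test borel_measurable_test_pull[OF that]] .
  moreover have "(\<lambda>\<omega>. prover_msg n \<epsilon> (fst \<omega>) (fst (snd \<omega> p))) \<in> borel_measurable (protocol_space n \<sigma> \<epsilon> q)"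
    by (rule measurable_compose_countable'[where f = "\<lambda>i \<omega>. prover_msg n \<epsilon> (fst \<omega>) i",
          OF borel_measurable_protocol_msg[OF assms(1)] arm]) auto
  ultimately have [measurable]: "(\<lambda>\<omega>. prover_msg n \<epsilon> (fst \<omega>) (fst (snd \<omega> p)) -
      (\<Sum>j<?m. snd (snd \<omega> p) j) / real ?m) \<in> borel_measurable (protocol_space n \<sigma> \<epsilon> q)"
    by (intro borel_measurable_diff borel_measurable_divide borel_measurable_sum) auto
  show "{\<omega> \<in> space (protocol_space n \<sigma> \<epsilon> q). \<bar>prover_msg n \<epsilon> (fst \<omega>) (fst (snd \<omega> p)) -
        (\<Sum>j<?m. snd (snd \<omega> p) j) / real ?m\<bar> \<le> proto_eps \<epsilon> (fst p) / 8}
      \<in> sets (protocol_space n \<sigma> \<epsilon> q)"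
    by measurable
qed

lemma sets_eps_opt_verifier_output:
  assumes "bandit n q"
  shows "{\<omega> \<in> space (protocol_space n \<sigma> \<epsilon> q).
            eps_opt_smooth n \<sigma> \<epsilon> u (verifier_output n \<sigma> (prover_msg n \<epsilon> (fst \<omega>)))}
           \<in> sets (protocol_space n \<sigma> \<epsilon> q)"
proof (rule sets_Collect_order_invariant[where g = "\<lambda>\<omega>. prover_msg n \<epsilon> (fst \<omega>)"
      and F = "\<lambda>w. eps_opt_smooth n \<sigma> \<epsilon> u (verifier_output n \<sigma> w)"])
  show "eps_opt_smooth n \<sigma> \<epsilon> u (verifier_output n \<sigma> v) = eps_opt_smooth n \<sigma> \<epsilon> u (verifier_output n \<sigma> w)"
    if "\<forall>i<n. \<forall>j<n. (v i \<le> v j) = (w i \<le> w j)" for v w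
    using verifier_output_order_cong[OF that] by simp
  show "(\<lambda>\<omega>. prover_msg n \<epsilon> (fst \<omega>) i) \<in> borel_measurable (protocol_space n \<sigma> \<epsilon> q)" for i
    using assms by (rule borel_measurable_protocol_msg)
qed

definition protocol_success :: "nat \<Rightarrow> real \<Rightarrow> real \<Rightarrow> (nat \<Rightarrow> real measure)
    \<Rightarrow> (nat \<times> nat \<Rightarrow> real) \<times> (nat \<times> nat \<Rightarrow> nat \<times> (nat \<Rightarrow> real)) \<Rightarrow> bool" where
  "protocol_success n \<sigma> \<epsilon> q \<omega> \<longleftrightarrow>
     verifier_accepts n \<sigma> \<epsilon> (prover_msg n \<epsilon> (fst \<omega>)) (snd \<omega>) \<and>
     eps_opt_smooth n \<sigma> \<epsilon> (arm_mean q) (verifier_output n \<sigma> (prover_msg n \<epsilon> (fst \<omega>)))"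

lemma sets_protocol_success:
  assumes "bandit n q" and "n > 0"
  shows "{\<omega> \<in> space (protocol_space n \<sigma> \<epsilon> q). protocol_success n \<sigma> \<epsilon> q \<omega>} \<in> sets (protocol_space n \<sigma> \<epsilon> q)"
proof -
  have "{\<omega> \<in> space (protocol_space n \<sigma> \<epsilon> q). protocol_success n \<sigma> \<epsilon> q \<omega>} =
      {\<omega> \<in> space (protocol_space n \<sigma> \<epsilon> q). verifier_accepts n \<sigma> \<epsilon> (prover_msg n \<epsilon> (fst \<omega>)) (snd \<omega>)} \<inter>
      {\<omega> \<in> space (protocol_space n \<sigma> \<epsilon> q).
         eps_opt_smooth n \<sigma> \<epsilon> (arm_mean q) (verifier_output n \<sigma> (prover_msg n \<epsilon> (fst \<omega>)))}"
    unfolding protocol_success_def by auto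
  then show ?thesis
    using sets.Int[OF sets_verifier_accepts[OF assms] sets_eps_opt_verifier_output[OF assms(1)]] by simp
qed

lemma (in smooth_setting) accurate_imp_protocol_success:
  assumes "0 < \<epsilon>" and "prover_accurate n \<epsilon> q x" and "verifier_accurate n \<sigma> \<epsilon> q v"
  shows "protocol_success n \<sigma> \<epsilon> q (x, v)"
  unfolding protocol_success_def fst_conv snd_conv
proof
  have close: "\<forall>i<n. \<bar>prover_msg n \<epsilon> x i - arm_mean q i\<bar> < \<epsilon> / 16"
    using assms(2) unfolding prover_accurate_def by simp
  then show "eps_opt_smooth n \<sigma> \<epsilon> (arm_mean q) (verifier_output n \<sigma> (prover_msg n \<epsilon> x))"
    by (intro verifier_output_eps_opt[where \<delta> = "\<epsilon> / 16"]) (auto simp: less_imp_le assms(1))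
  show "verifier_accepts n \<sigma> \<epsilon> (prover_msg n \<epsilon> x) v"
    unfolding verifier_accepts_iff
  proof
    fix p assume "p \<in> verifier_tests n \<sigma> \<epsilon>"
    then have arm: "fst (v p) < n" and sample: "\<bar>(\<Sum>j<proto_m n \<sigma> \<epsilon> (fst p). snd (v p) j) / real (proto_m n \<sigma> \<epsilon> (fst p))
        - arm_mean q (fst (v p))\<bar> < proto_eps \<epsilon> (fst p) / 16"
      using assms(3) unfolding verifier_accurate_def sample_accurate_def by auto
    then show "\<bar>prover_msg n \<epsilon> x (fst (v p)) - (\<Sum>j<proto_m n \<sigma> \<epsilon> (fst p). snd (v p) j) /
        real (proto_m n \<sigma> \<epsilon> (fst p))\<bar> \<le> proto_eps \<epsilon> (fst p) / 8"
      using close[rule_format, OF arm] proto_eps_ge[OF assms(1), of "fst p"] by linarith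
  qed
qed

theorem mainTheorem3:
  fixes n :: nat and \<sigma> \<epsilon> :: real and q :: "nat \<Rightarrow> real measure"
  assumes "n > 0"
    and "1 / real n \<le> \<sigma>" and "\<sigma> \<le> 1"
    and "0 < \<epsilon>" and "\<epsilon> < 1"
    and "bandit n q"
  shows "measure (protocol_space n \<sigma> \<epsilon> q)
           {\<omega> \<in> space (protocol_space n \<sigma> \<epsilon> q).
              verifier_accepts n \<sigma> \<epsilon> (prover_msg n \<epsilon> (fst \<omega>)) (snd \<omega>) \<and>
              eps_opt_smooth n \<sigma> \<epsilon> (arm_mean q)
                (verifier_output n \<sigma> (prover_msg n \<epsilon> (fst \<omega>)))}
         \<ge> 2 / 3"
proof -
  interpret smooth_setting n \<sigma> using assms(1-3) by unfold_locales
  interpret pair_prob_space "prover_space n \<epsilon> q" "verifier_space n \<sigma> \<epsilon> q"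
    using prob_space_prover_space prob_space_verifier_space assms(1,6)
    by (simp add: pair_prob_space_def pair_sigma_finite_def prob_space_imp_sigma_finite)
  let ?GP = "{x \<in> space (prover_space n \<epsilon> q). prover_accurate n \<epsilon> q x}"
  let ?GV = "{v \<in> space (verifier_space n \<sigma> \<epsilon> q). verifier_accurate n \<sigma> \<epsilon> q v}"
  have "5 / 6 \<le> M1.prob ?GP"
    using prover_accurate_prob[OF assms(1,4,5,6)] assms(5) by linarith
  moreover have "5 / 6 \<le> M2.prob ?GV"
    by (rule verifier_accurate_prob[OF assms(1) sigma_pos assms(4-6)])
  ultimately have "(5 / 6) * (5 / 6) \<le> M1.prob ?GP * M2.prob ?GV"
    by (intro mult_mono) auto
  also have "\<dots> = prob (?GP \<times> ?GV)"
    using sets_prover_accurate sets_verifier_accurate assms(1,6) by (simp add: prob_Times)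
  also have "\<dots> \<le> prob {\<omega> \<in> space (protocol_space n \<sigma> \<epsilon> q). protocol_success n \<sigma> \<epsilon> q \<omega>}"
    using accurate_imp_protocol_success[OF assms(4)] sets_protocol_success[OF assms(6,1)]
    unfolding protocol_space_def
    by (intro finite_measure_mono) (auto simp: space_pair_measure)
  finally show ?thesis unfolding protocol_success_def protocol_space_def by simp
qed

end
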